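(* Let $\mathbf{F}$ be a normed space of functions over a set $X$. Then $\mathbf{F}$ is reflexive if and only if $\mathbf{F}$ is regular and the closed linear span of the point evaluations $\{x_{\mathbf{F}}:x\in X\}$ equals $\mathbf{F}^*$.
   Context: A normed space of functions over a set $X$ is a linear subspace of the space $\mathcal{F}(X)$ of all functions $X\to\mathbb{C}$ with a norm for which each point evaluation $x_{\mathbf{F}}:f\mapsto f(x)$ is bounded. $\mathbf{F}$ is regular if its closed unit ball is closed in $\mathcal{F}(X)$ with respect to the topology of pointwise convergence on $X$ (equivalently, the pointwise closure of the unit ball of $\mathbf{F}$, taken as the unit ball of the space of positive multiples of its elements with the corresponding Minkowski norm, gives back $\mathbf{F}$ with its norm). *)

theory Defs
  imports "HOL-Analysis.Analysis"
begin

text \<open>A normed space of functions over the set X (rendered as the type 'x):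
  a complex linear subspace F of 'x \<Rightarrow> complex with a norm N on F such that
  every point evaluation f \<mapsto> f x is bounded.\<close>

definition normed_function_space :: "('x \<Rightarrow> complex) set \<Rightarrow> (('x \<Rightarrow> complex) \<Rightarrow> real) \<Rightarrow> bool" where
  "normed_function_space F N \<longleftrightarrow>
     (\<lambda>x. 0) \<in> F \<and>
     (\<forall>f\<in>F. \<forall>g\<in>F. (\<lambda>x. f x + g x) \<in> F) \<and>
     (\<forall>c. \<forall>f\<in>F. (\<lambda>x. c * f x) \<in> F) \<and>
     (\<forall>f\<in>F. 0 \<le> N f) \<and>
     (\<forall>f\<in>F. N f = 0 \<longleftrightarrow> f = (\<lambda>x. 0)) \<and>
     (\<forall>f\<in>F. \<forall>g\<in>F. N (\<lambda>x. f x + g x) \<le> N f + N g) \<and>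
     (\<forall>c. \<forall>f\<in>F. N (\<lambda>x. c * f x) = cmod c * N f) \<and>
     (\<forall>x. \<exists>C. \<forall>f\<in>F. cmod (f x) \<le> C * N f)"

text \<open>Dual space F*: bounded complex-linear functionals on F (values outside F irrelevant).\<close>

definition dual_space :: "('x \<Rightarrow> complex) set \<Rightarrow> (('x \<Rightarrow> complex) \<Rightarrow> real)
     \<Rightarrow> ((('x \<Rightarrow> complex) \<Rightarrow> complex) set)" where
  "dual_space F N = {\<phi>.
     (\<forall>f\<in>F. \<forall>g\<in>F. \<phi> (\<lambda>x. f x + g x) = \<phi> f + \<phi> g) \<and>
     (\<forall>c. \<forall>f\<in>F. \<phi> (\<lambda>x. c * f x) = c * \<phi> f) \<and>
     (\<exists>C. \<forall>f\<in>F. cmod (\<phi> f) \<le> C * N f)}"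

definition dual_norm :: "('x \<Rightarrow> complex) set \<Rightarrow> (('x \<Rightarrow> complex) \<Rightarrow> real)
     \<Rightarrow> (('x \<Rightarrow> complex) \<Rightarrow> complex) \<Rightarrow> real" where
  "dual_norm F N \<phi> = (SUP f\<in>{f\<in>F. N f \<le> 1}. cmod (\<phi> f))"

definition bidual_space :: "('x \<Rightarrow> complex) set \<Rightarrow> (('x \<Rightarrow> complex) \<Rightarrow> real)
     \<Rightarrow> (((('x \<Rightarrow> complex) \<Rightarrow> complex) \<Rightarrow> complex) set)" where
  "bidual_space F N = {\<Phi>.
     (\<forall>\<phi>\<in>dual_space F N. \<forall>\<psi>\<in>dual_space F N. \<Phi> (\<lambda>f. \<phi> f + \<psi> f) = \<Phi> \<phi> + \<Phi> \<psi>) \<and>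
     (\<forall>c. \<forall>\<phi>\<in>dual_space F N. \<Phi> (\<lambda>f. c * \<phi> f) = c * \<Phi> \<phi>) \<and>
     (\<exists>C. \<forall>\<phi>\<in>dual_space F N. cmod (\<Phi> \<phi>) \<le> C * dual_norm F N \<phi>)}"

definition reflexive_fs :: "('x \<Rightarrow> complex) set \<Rightarrow> (('x \<Rightarrow> complex) \<Rightarrow> real) \<Rightarrow> bool" where
  "reflexive_fs F N \<longleftrightarrow>
     (\<forall>\<Phi>\<in>bidual_space F N. \<exists>f\<in>F. \<forall>\<phi>\<in>dual_space F N. \<Phi> \<phi> = \<phi> f)"

text \<open>Regular: the closed unit ball is closed in the topology of pointwise convergence
  (the product topology on 'x \<Rightarrow> complex).\<close>

definition regular_fs :: "('x \<Rightarrow> complex) set \<Rightarrow> (('x \<Rightarrow> complex) \<Rightarrow> real) \<Rightarrow> bool" where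
  "regular_fs F N \<longleftrightarrow> closed {f\<in>F. N f \<le> 1}"

definition eval_closed_span :: "('x \<Rightarrow> complex) set \<Rightarrow> (('x \<Rightarrow> complex) \<Rightarrow> real)
     \<Rightarrow> ((('x \<Rightarrow> complex) \<Rightarrow> complex) set)" where
  "eval_closed_span F N = {\<phi>\<in>dual_space F N. \<forall>\<epsilon>>0. \<exists>S a. finite S \<and>
      dual_norm F N (\<lambda>f. \<phi> f - (\<Sum>x\<in>S. a x * f x)) < \<epsilon>}"

end

(*
  Everything rests on the Hahn-Banach extension theorem for functionals dominated by a
  seminorm on a space of functions. Write J for the canonical embedding of F into F** and
  delta_x for the evaluation at x.

  If J is onto, a functional on F* vanishing at every delta_x is J f with f vanishing
  everywhere, hence it is zero: the delta_x span a dense subspace of F*. If g is a pointwise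
  limit of the unit ball, then |sum a_x g(x)| <= ||sum a_x delta_x||, so the functional
  sum a_x delta_x |-> sum a_x g(x) extends to some Phi in F** of norm at most 1. Writing
  Phi = J f forces f = g, hence g lies in F, and a norming functional for g gives N g <= 1.

  Conversely, let Phi be in F** and g(x) = Phi(delta_x). For finite S the dual of the finite
  dimensional quotient F / {f. f = 0 on S} consists of combinations of the delta_x with x in S,
  so g agrees on S with some f in F of norm less than ||Phi|| + 1. After rescaling, these
  interpolants put a multiple of g in the pointwise closure of the unit ball, so g lies in F by
  regularity; finally Phi = J g, as both are continuous on F* and agree on the dense span of
  the delta_x.
*)
theory Submission
  imports Defs "HOL-Library.Function_Algebras"
begin

definition fscale :: "complex \<Rightarrow> ('a \<Rightarrow> complex) \<Rightarrow> 'a \<Rightarrow> complex" where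
  "fscale c f = (\<lambda>x. c * f x)"

lemma fscale_apply [simp]: "fscale c f x = c * f x"
  by (simp add: fscale_def)

lemma fscale_fscale: "fscale a (fscale b f) = fscale (a * b) f"
  by (simp add: fun_eq_iff)

lemma fscale_one [simp]: "fscale 1 f = f"
  and fscale_zero_left [simp]: "fscale 0 f = 0"
  and fscale_minus_one: "fscale (-1) f = - f"
  by (simp_all add: fun_eq_iff)

definition fsubspace :: "('a \<Rightarrow> complex) set \<Rightarrow> bool" where
  "fsubspace V \<longleftrightarrow> 0 \<in> V \<and> (\<forall>f\<in>V. \<forall>g\<in>V. f + g \<in> V) \<and> (\<forall>c. \<forall>f\<in>V. fscale c f \<in> V)"

lemma
  assumes "fsubspace V"
  shows fsubspace_0: "0 \<in> V"
    and fsubspace_add: "f \<in> V \<Longrightarrow> g \<in> V \<Longrightarrow> f + g \<in> V"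
    and fsubspace_scale: "f \<in> V \<Longrightarrow> fscale c f \<in> V"
    and fsubspace_uminus: "f \<in> V \<Longrightarrow> - f \<in> V"
    and fsubspace_diff: "f \<in> V \<Longrightarrow> g \<in> V \<Longrightarrow> f - g \<in> V"
proof -
  show "0 \<in> V" using assms unfolding fsubspace_def by blast
  show add: "f + g \<in> V" if "f \<in> V" "g \<in> V" for f g
    using assms that unfolding fsubspace_def by blast
  show scale: "fscale c f \<in> V" if "f \<in> V" for c f
    using assms that unfolding fsubspace_def by blast
  show uminus: "- f \<in> V" if "f \<in> V" for f
    using scale[OF that, of "-1"] by (simp add: fscale_minus_one)
  show "f - g \<in> V" if "f \<in> V" "g \<in> V" for f g
    using add[OF that(1) uminus[OF that(2)]] by simp
qed

lemma fsubspace_span_singleton: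
  "fsubspace {fscale c f |c. True}"
  unfolding fsubspace_def
proof (intro conjI ballI allI)
  show "0 \<in> {fscale c f |c. True}" by (rule CollectI, rule exI[of _ 0]) simp
  fix g h assume "g \<in> {fscale c f |c. True}" "h \<in> {fscale c f |c. True}"
  then obtain a b where "g = fscale a f" "h = fscale b f" by blast
  then have "g + h = fscale (a + b) f" by (simp add: fun_eq_iff distrib_right)
  then show "g + h \<in> {fscale c f |c. True}" by blast
next
  fix d g assume "g \<in> {fscale c f |c. True}"
  then show "fscale d g \<in> {fscale c f |c. True}" by (auto simp: fscale_fscale)
qed

definition seminorm_on :: "('a \<Rightarrow> complex) set \<Rightarrow> (('a \<Rightarrow> complex) \<Rightarrow> real) \<Rightarrow> bool" where
  "seminorm_on V p \<longleftrightarrow>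
     (\<forall>f\<in>V. \<forall>g\<in>V. p (f + g) \<le> p f + p g) \<and> (\<forall>c. \<forall>f\<in>V. p (fscale c f) = cmod c * p f)"

lemma
  assumes "seminorm_on V p"
  shows seminorm_on_triangle: "f \<in> V \<Longrightarrow> g \<in> V \<Longrightarrow> p (f + g) \<le> p f + p g"
    and seminorm_on_scale: "f \<in> V \<Longrightarrow> p (fscale c f) = cmod c * p f"
  using assms unfolding seminorm_on_def by blast+

lemma
  assumes "fsubspace V" "seminorm_on V p"
  shows seminorm_on_0: "p 0 = 0"
    and seminorm_on_nonneg: "f \<in> V \<Longrightarrow> 0 \<le> p f"
proof -
  show p0: "p 0 = 0"
    using seminorm_on_scale[OF assms(2) fsubspace_0[OF assms(1)], of 0] by simp
  show "0 \<le> p f" if "f \<in> V"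
  proof -
    have "p 0 \<le> p f + p (- f)"
      using seminorm_on_triangle[OF assms(2) that fsubspace_uminus[OF assms(1) that]] by simp
    moreover have "p (- f) = p f"
      using seminorm_on_scale[OF assms(2) that, of "-1"] by (simp add: fscale_minus_one)
    ultimately show ?thesis using p0 by simp
  qed
qed

lemma seminorm_onI_scale_le:
  assumes V: "fsubspace V" and nonneg: "\<And>f. f \<in> V \<Longrightarrow> 0 \<le> p f"
    and triangle: "\<And>f g. f \<in> V \<Longrightarrow> g \<in> V \<Longrightarrow> p (f + g) \<le> p f + p g"
    and scale_le: "\<And>c f. f \<in> V \<Longrightarrow> p (fscale c f) \<le> cmod c * p f"
  shows "seminorm_on V p"
  unfolding seminorm_on_def
proof (intro conjI ballI allI triangle)
  fix c and f assume f: "f \<in> V"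
  show "p (fscale c f) = cmod c * p f"
  proof (cases "c = 0")
    case True
    then show ?thesis using scale_le[OF f, of 0] nonneg[OF fsubspace_0[OF V]] by simp
  next
    case False
    have "p f = p (fscale (1 / c) (fscale c f))"
      using False by (simp add: fscale_fscale)
    also have "\<dots> \<le> cmod (1 / c) * p (fscale c f)"
      by (rule scale_le[OF fsubspace_scale[OF V f]])
    finally have "cmod c * p f \<le> p (fscale c f)"
      using False by (simp add: norm_divide field_simps)
    then show ?thesis using scale_le[OF f, of c] by linarith
  qed
qed

definition clinear_on :: "('a \<Rightarrow> complex) set \<Rightarrow> (('a \<Rightarrow> complex) \<Rightarrow> complex) \<Rightarrow> bool" where
  "clinear_on V \<phi> \<longleftrightarrow>
     (\<forall>f\<in>V. \<forall>g\<in>V. \<phi> (f + g) = \<phi> f + \<phi> g) \<and> (\<forall>c. \<forall>f\<in>V. \<phi> (fscale c f) = c * \<phi> f)"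

lemma
  assumes "clinear_on V \<phi>"
  shows clinear_on_add: "f \<in> V \<Longrightarrow> g \<in> V \<Longrightarrow> \<phi> (f + g) = \<phi> f + \<phi> g"
    and clinear_on_scale: "f \<in> V \<Longrightarrow> \<phi> (fscale c f) = c * \<phi> f"
  using assms unfolding clinear_on_def by blast+

lemma
  assumes "clinear_on V \<phi>" "fsubspace V"
  shows clinear_on_0: "\<phi> 0 = 0"
    and clinear_on_diff: "f \<in> V \<Longrightarrow> g \<in> V \<Longrightarrow> \<phi> (f - g) = \<phi> f - \<phi> g"
proof -
  show "\<phi> 0 = 0"
    using clinear_on_scale[OF assms(1) fsubspace_0[OF assms(2)], of 0] by simp
  show "\<phi> (f - g) = \<phi> f - \<phi> g" if "f \<in> V" "g \<in> V"
    using clinear_on_add[OF assms(1) fsubspace_diff[OF assms(2) that] that(2)] by simp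
qed

section \<open>The Hahn--Banach theorem\<close>

(* Partial real-linear extensions of u0 dominated by p, represented by their graphs so that
   Zorn's lemma can be applied to the inclusion order. *)

definition dominated_graph ::
  "('a \<Rightarrow> complex) set \<Rightarrow> (('a \<Rightarrow> complex) \<Rightarrow> real) \<Rightarrow> ('a \<Rightarrow> complex) set
     \<Rightarrow> (('a \<Rightarrow> complex) \<Rightarrow> real) \<Rightarrow> (('a \<Rightarrow> complex) \<times> real) set \<Rightarrow> bool" where
  "dominated_graph V p M u0 G \<longleftrightarrow>
     (\<forall>f r s. (f, r) \<in> G \<longrightarrow> (f, s) \<in> G \<longrightarrow> r = s) \<and>
     (\<forall>f r g s. (f, r) \<in> G \<longrightarrow> (g, s) \<in> G \<longrightarrow> (f + g, r + s) \<in> G) \<and>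
     (\<forall>f r t. (f, r) \<in> G \<longrightarrow> (fscale (of_real t) f, t * r) \<in> G) \<and>
     (\<forall>f r. (f, r) \<in> G \<longrightarrow> f \<in> V \<and> r \<le> p f) \<and>
     (\<forall>f\<in>M. (f, u0 f) \<in> G)"

lemma
  assumes "dominated_graph V p M u0 G"
  shows dominated_graph_unique: "(f, r) \<in> G \<Longrightarrow> (f, s) \<in> G \<Longrightarrow> r = s"
    and dominated_graph_add: "(f, r) \<in> G \<Longrightarrow> (g, s) \<in> G \<Longrightarrow> (f + g, r + s) \<in> G"
    and dominated_graph_scale: "(f, r) \<in> G \<Longrightarrow> (fscale (of_real t) f, t * r) \<in> G"
    and dominated_graph_in: "(f, r) \<in> G \<Longrightarrow> f \<in> V"
    and dominated_graph_le: "(f, r) \<in> G \<Longrightarrow> r \<le> p f"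
    and dominated_graph_extends: "f \<in> M \<Longrightarrow> (f, u0 f) \<in> G"
  using assms unfolding dominated_graph_def by blast+

lemma dominated_graph_diff:
  assumes "dominated_graph V p M u0 G" "(f, r) \<in> G" "(g, s) \<in> G"
  shows "(f - g, r - s) \<in> G"
  using dominated_graph_add[OF assms(1,2) dominated_graph_scale[OF assms(1,3), of "-1"]]
  by (simp add: fscale_minus_one)

lemma dominated_graph_Union_chain:
  assumes C: "C \<in> chains {G. dominated_graph V p M u0 G}" "C \<noteq> {}"
  shows "dominated_graph V p M u0 (\<Union>C)"
proof -
  have graph: "dominated_graph V p M u0 G" if "G \<in> C" for G
    using C(1) that unfolding chains_def by blast
  have common: "\<exists>G\<in>C. x \<in> G \<and> y \<in> G" if x: "x \<in> \<Union>C" and y: "y \<in> \<Union>C" for x y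
  proof -
    obtain G H where "G \<in> C" "H \<in> C" "x \<in> G" "y \<in> H" using x y by blast
    moreover have "G \<subseteq> H \<or> H \<subseteq> G"
      using C(1) \<open>G \<in> C\<close> \<open>H \<in> C\<close> unfolding chains_def chain_subset_def by blast
    ultimately show ?thesis by blast
  qed
  obtain G0 where "G0 \<in> C" using C(2) by blast
  show ?thesis
    unfolding dominated_graph_def
  proof (intro conjI allI impI ballI)
    fix f r s assume "(f, r) \<in> \<Union>C" "(f, s) \<in> \<Union>C"
    then obtain G where "G \<in> C" "(f, r) \<in> G" "(f, s) \<in> G" using common by blast
    then show "r = s" using dominated_graph_unique[OF graph] by blast
  next
    fix f r g s assume "(f, r) \<in> \<Union>C" "(g, s) \<in> \<Union>C"
    then obtain G where "G \<in> C" "(f, r) \<in> G" "(g, s) \<in> G" using common by blast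
    then show "(f + g, r + s) \<in> \<Union>C" using dominated_graph_add[OF graph] by blast
  next
    fix f r t assume "(f, r) \<in> \<Union>C"
    then show "(fscale (of_real t) f, t * r) \<in> \<Union>C" using graph dominated_graph_scale by blast
  next
    fix f r assume "(f, r) \<in> \<Union>C"
    then show "f \<in> V" "r \<le> p f" using graph dominated_graph_in dominated_graph_le by blast+
  next
    fix f assume "f \<in> M"
    then show "(f, u0 f) \<in> \<Union>C" using \<open>G0 \<in> C\<close> graph dominated_graph_extends by blast
  qed
qed

definition graph_extension ::
  "(('a \<Rightarrow> complex) \<times> real) set \<Rightarrow> ('a \<Rightarrow> complex) \<Rightarrow> real \<Rightarrow> (('a \<Rightarrow> complex) \<times> real) set"
  where "graph_extension G h c = {(f + fscale (of_real t) h, r + t * c) |f r t. (f, r) \<in> G}"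

lemma graph_extensionI:
  "(f, r) \<in> G \<Longrightarrow> (f + fscale (of_real t) h, r + t * c) \<in> graph_extension G h c"
  unfolding graph_extension_def by blast

lemma graph_extensionE:
  assumes "(g, s) \<in> graph_extension G h c"
  obtains f r t where "(f, r) \<in> G" "g = f + fscale (of_real t) h" "s = r + t * c"
  using assms unfolding graph_extension_def by blast

context
  fixes V :: "('a \<Rightarrow> complex) set" and p and M and u0 and G
  assumes V: "fsubspace V" and p: "seminorm_on V p"
    and G: "dominated_graph V p M u0 G" and G0: "(0, 0) \<in> G"
begin

lemma dominated_graph_gap:
  assumes h: "h \<in> V"
  obtains c where "\<And>f r. (f, r) \<in> G \<Longrightarrow> r + c \<le> p (f + h)"
    and "\<And>f r. (f, r) \<in> G \<Longrightarrow> r - c \<le> p (f - h)"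
proof -
  have sep: "r - p (f - h) \<le> p (g + h) - s" if "(f, r) \<in> G" "(g, s) \<in> G" for f r g s
  proof -
    have f: "f \<in> V" and g: "g \<in> V" using that dominated_graph_in[OF G] by blast+
    have "r + s \<le> p ((f - h) + (g + h))"
      using dominated_graph_le[OF G dominated_graph_add[OF G that]] by simp
    also have "\<dots> \<le> p (f - h) + p (g + h)"
      by (rule seminorm_on_triangle[OF p fsubspace_diff[OF V f h] fsubspace_add[OF V g h]])
    finally show ?thesis by simp
  qed
  define A where "A = {r - p (f - h) |f r. (f, r) \<in> G}"
  have A_ne: "A \<noteq> {}" using G0 unfolding A_def by blast
  have A_bdd: "bdd_above A"
    using sep[OF _ G0] unfolding A_def by (intro bdd_aboveI[of _ "p (0 + h) - 0"]) blast
  show ?thesis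
  proof
    fix f r assume "(f, r) \<in> G"
    have "Sup A \<le> p (f + h) - r"
    proof (rule cSup_least[OF A_ne])
      show "x \<le> p (f + h) - r" if "x \<in> A" for x
        using that sep[OF _ \<open>(f, r) \<in> G\<close>] unfolding A_def by blast
    qed
    then show "r + Sup A \<le> p (f + h)" by simp
    have "r - p (f - h) \<in> A" using \<open>(f, r) \<in> G\<close> unfolding A_def by blast
    then have "r - p (f - h) \<le> Sup A" by (rule cSup_upper[OF _ A_bdd])
    then show "r - Sup A \<le> p (f - h)" by simp
  qed
qed

lemma dominated_graph_gap_scaled:
  assumes h: "h \<in> V" and fr: "(f, r) \<in> G"
    and up: "\<And>f r. (f, r) \<in> G \<Longrightarrow> r + c \<le> p (f + h)"
    and down: "\<And>f r. (f, r) \<in> G \<Longrightarrow> r - c \<le> p (f - h)"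
  shows "r + t * c \<le> p (f + fscale (of_real t) h)"
proof -
  have f: "f \<in> V" using dominated_graph_in[OF G fr] .
  have scaled: "(fscale (of_real (1 / s)) f, r / s) \<in> G" for s
    using dominated_graph_scale[OF G fr, of "1 / s"] by simp
  consider "t = 0" | "t > 0" | "t < 0" by linarith
  then show ?thesis
  proof cases
    case 1
    then show ?thesis using dominated_graph_le[OF G fr] by simp
  next
    case 2
    have "t * (r / t + c) \<le> t * p (fscale (of_real (1 / t)) f + h)"
      using up[OF scaled[of t]] 2 by (intro mult_left_mono) auto
    also have "\<dots> = p (fscale (of_real t) (fscale (of_real (1 / t)) f + h))"
      using seminorm_on_scale[OF p fsubspace_add[OF V fsubspace_scale[OF V f] h]] 2 by simp
    also have "fscale (of_real t) (fscale (of_real (1 / t)) f + h) = f + fscale (of_real t) h"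
      using 2 by (simp add: fun_eq_iff algebra_simps)
    finally have "t * (r / t + c) \<le> p (f + fscale (of_real t) h)" .
    moreover have "t * (r / t + c) = r + t * c" using 2 by (simp add: field_simps)
    ultimately show ?thesis by simp
  next
    case 3
    define s where "s = - t"
    have s: "s > 0" using 3 by (simp add: s_def)
    have "s * (r / s - c) \<le> s * p (fscale (of_real (1 / s)) f - h)"
      using down[OF scaled[of s]] s by (intro mult_left_mono) auto
    also have "\<dots> = p (fscale (of_real s) (fscale (of_real (1 / s)) f - h))"
      using seminorm_on_scale[OF p fsubspace_diff[OF V fsubspace_scale[OF V f] h]] s by simp
    also have "fscale (of_real s) (fscale (of_real (1 / s)) f - h) = f + fscale (of_real t) h"
      using s by (simp add: s_def fun_eq_iff algebra_simps)
    finally have "s * (r / s - c) \<le> p (f + fscale (of_real t) h)" .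
    moreover have "s * (r / s - c) = r + t * c" using s by (simp add: s_def field_simps)
    ultimately show ?thesis by simp
  qed
qed

lemma graph_extension_unique:
  assumes h: "\<nexists>r. (h, r) \<in> G"
    and "(g, s) \<in> graph_extension G h c" "(g, s') \<in> graph_extension G h c"
  shows "s = s'"
proof -
  obtain f r t f' r' t' where fr: "(f, r) \<in> G" "(f', r') \<in> G"
    and g: "g = f + fscale (of_real t) h" "g = f' + fscale (of_real t') h"
    and s: "s = r + t * c" "s' = r' + t' * c"
    using assms(2,3) by (elim graph_extensionE)
  have diff: "f' - f = fscale (of_real (t - t')) h"
    using g by (simp add: fun_eq_iff algebra_simps)
  have "t = t'"
  proof (rule ccontr)
    assume "t \<noteq> t'"
    then have "fscale (of_real (1 / (t - t'))) (f' - f) = h"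
      unfolding diff by (simp add: fscale_fscale flip: of_real_mult)
    then show False
      using h dominated_graph_scale[OF G dominated_graph_diff[OF G fr(2,1)]] by metis
  qed
  then have "f = f'" using g by simp
  then show "s = s'" using s \<open>t = t'\<close> dominated_graph_unique[OF G fr(1)] fr(2) by simp
qed

lemma dominated_graph_extension:
  assumes h: "h \<in> V" "\<nexists>r. (h, r) \<in> G"
    and up: "\<And>f r. (f, r) \<in> G \<Longrightarrow> r + c \<le> p (f + h)"
    and down: "\<And>f r. (f, r) \<in> G \<Longrightarrow> r - c \<le> p (f - h)"
  shows "dominated_graph V p M u0 (graph_extension G h c)"
  unfolding dominated_graph_def
proof (intro conjI allI impI ballI)
  fix g s s' assume "(g, s) \<in> graph_extension G h c" "(g, s') \<in> graph_extension G h c"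
  then show "s = s'" by (rule graph_extension_unique[OF h(2)])
next
  fix g s g' s' assume "(g, s) \<in> graph_extension G h c" "(g', s') \<in> graph_extension G h c"
  then obtain f r t f' r' t' where fr: "(f, r) \<in> G" "(f', r') \<in> G"
    and g: "g = f + fscale (of_real t) h" "g' = f' + fscale (of_real t') h"
    and s: "s = r + t * c" "s' = r' + t' * c"
    by (elim graph_extensionE)
  have "g + g' = (f + f') + fscale (of_real (t + t')) h"
    unfolding g by (simp add: fun_eq_iff algebra_simps)
  moreover have "s + s' = (r + r') + (t + t') * c"
    unfolding s by (simp add: algebra_simps)
  ultimately show "(g + g', s + s') \<in> graph_extension G h c"
    using graph_extensionI[OF dominated_graph_add[OF G fr]] by (simp only:)
next
  fix g s a assume "(g, s) \<in> graph_extension G h c"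
  then obtain f r t where fr: "(f, r) \<in> G" and g: "g = f + fscale (of_real t) h"
    and s: "s = r + t * c"
    by (elim graph_extensionE)
  have "fscale (of_real a) g = fscale (of_real a) f + fscale (of_real (a * t)) h"
    unfolding g by (simp add: fun_eq_iff algebra_simps)
  moreover have "a * s = a * r + (a * t) * c"
    unfolding s by (simp add: algebra_simps)
  ultimately show "(fscale (of_real a) g, a * s) \<in> graph_extension G h c"
    using graph_extensionI[OF dominated_graph_scale[OF G fr]] by (simp only:)
next
  fix g s assume "(g, s) \<in> graph_extension G h c"
  then obtain f r t where fr: "(f, r) \<in> G" and g: "g = f + fscale (of_real t) h"
    and s: "s = r + t * c"
    by (elim graph_extensionE)
  show "g \<in> V"
    unfolding g by (rule fsubspace_add[OF V dominated_graph_in[OF G fr] fsubspace_scale[OF V h(1)]])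
  show "s \<le> p g"
    unfolding g s by (rule dominated_graph_gap_scaled[OF h(1) fr up down])
next
  fix f assume "f \<in> M"
  then show "(f, u0 f) \<in> graph_extension G h c"
    using graph_extensionI[OF dominated_graph_extends[OF G], of f 0] by simp
qed

lemma dominated_graph_extend:
  assumes h: "h \<in> V"
  shows "\<exists>G' r. dominated_graph V p M u0 G' \<and> G \<subseteq> G' \<and> (h, r) \<in> G'"
proof (cases "\<exists>r. (h, r) \<in> G")
  case True
  then show ?thesis using G by blast
next
  case False
  obtain c where up: "\<And>f r. (f, r) \<in> G \<Longrightarrow> r + c \<le> p (f + h)"
    and down: "\<And>f r. (f, r) \<in> G \<Longrightarrow> r - c \<le> p (f - h)"
    using dominated_graph_gap[OF h] by blast
  have "G \<subseteq> graph_extension G h c" using graph_extensionI[of _ _ G 0 h c] by auto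
  moreover have "(h, c) \<in> graph_extension G h c" using graph_extensionI[OF G0, of 1 h c] by simp
  ultimately show ?thesis using dominated_graph_extension[OF h False up down] by blast
qed

end

lemma real_Hahn_Banach:
  assumes V: "fsubspace V" and p: "seminorm_on V p" and M: "fsubspace M" "M \<subseteq> V"
    and u0_add: "\<And>f g. f \<in> M \<Longrightarrow> g \<in> M \<Longrightarrow> u0 (f + g) = u0 f + u0 g"
    and u0_scale: "\<And>t f. f \<in> M \<Longrightarrow> u0 (fscale (of_real t) f) = t * u0 f"
    and u0_le: "\<And>f. f \<in> M \<Longrightarrow> u0 f \<le> p f"
  obtains u where "\<And>f g. f \<in> V \<Longrightarrow> g \<in> V \<Longrightarrow> u (f + g) = u f + u g"
    and "\<And>t f. f \<in> V \<Longrightarrow> u (fscale (of_real t) f) = t * u f"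
    and "\<And>f. f \<in> M \<Longrightarrow> u f = u0 f"
    and "\<And>f. f \<in> V \<Longrightarrow> u f \<le> p f"
proof -
  let ?graphs = "{G. dominated_graph V p M u0 G}"
  define G0 where "G0 = {(f, u0 f) |f. f \<in> M}"
  have "dominated_graph V p M u0 G0"
    unfolding dominated_graph_def
  proof (intro conjI allI impI ballI)
    fix f r g s assume "(f, r) \<in> G0" "(g, s) \<in> G0"
    then have fg: "f \<in> M" "g \<in> M" and "r = u0 f" "s = u0 g" unfolding G0_def by auto
    then show "(f + g, r + s) \<in> G0"
      using fsubspace_add[OF M(1) fg] u0_add[OF fg] unfolding G0_def by auto
  next
    fix f r t assume "(f, r) \<in> G0"
    then have f: "f \<in> M" and "r = u0 f" unfolding G0_def by auto
    then show "(fscale (of_real t) f, t * r) \<in> G0"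
      using fsubspace_scale[OF M(1) f] u0_scale[OF f] unfolding G0_def by auto
  qed (use M u0_le in \<open>auto simp: G0_def\<close>)
  then have "\<forall>C\<in>chains ?graphs. \<exists>U\<in>?graphs. \<forall>X\<in>C. X \<subseteq> U"
    using dominated_graph_Union_chain by (metis Union_upper empty_iff mem_Collect_eq)
  from Zorn_Lemma2[OF this] obtain G where G: "dominated_graph V p M u0 G"
    and maximal: "\<forall>G'\<in>?graphs. G \<subseteq> G' \<longrightarrow> G' = G"
    by blast
  have "(0, 0) \<in> G"
    using dominated_graph_scale[OF G dominated_graph_extends[OF G fsubspace_0[OF M(1)]], of 0]
    by simp
  have "\<forall>h\<in>V. \<exists>r. (h, r) \<in> G"
  proof
    fix h assume "h \<in> V"
    then obtain G' r where "dominated_graph V p M u0 G'" "G \<subseteq> G'" "(h, r) \<in> G'"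
      using dominated_graph_extend[OF V p G \<open>(0, 0) \<in> G\<close>] by blast
    then show "\<exists>r. (h, r) \<in> G" using maximal by blast
  qed
  from bchoice[OF this] obtain u where u: "\<And>h. h \<in> V \<Longrightarrow> (h, u h) \<in> G" by blast
  have u_eq: "u f = r" if "(f, r) \<in> G" for f r
    using dominated_graph_unique[OF G u[OF dominated_graph_in[OF G that]] that] .
  show ?thesis
  proof
    show "u (f + g) = u f + u g" if "f \<in> V" "g \<in> V" for f g
      using u_eq[OF dominated_graph_add[OF G u[OF that(1)] u[OF that(2)]]] .
    show "u (fscale (of_real t) f) = t * u f" if "f \<in> V" for t f
      using u_eq[OF dominated_graph_scale[OF G u[OF that]]] .
    show "u f = u0 f" if "f \<in> M" for f
      using u_eq[OF dominated_graph_extends[OF G that]] .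
    show "u f \<le> p f" if "f \<in> V" for f
      using dominated_graph_le[OF G u[OF that]] .
  qed
qed

(* A complex-linear functional is determined by its real part u: phi f = u f - i * u (i * f). *)
lemma clinear_on_complexification:
  assumes V: "fsubspace V"
    and u_add: "\<And>f g. f \<in> V \<Longrightarrow> g \<in> V \<Longrightarrow> u (f + g) = u f + u g"
    and u_scale: "\<And>t f. f \<in> V \<Longrightarrow> u (fscale (of_real t) f) = t * u f"
  shows "clinear_on V (\<lambda>f. of_real (u f) - \<i> * of_real (u (fscale \<i> f)))"
  unfolding clinear_on_def
proof (intro conjI ballI allI)
  fix f g assume f: "f \<in> V" and g: "g \<in> V"
  have "fscale \<i> (f + g) = fscale \<i> f + fscale \<i> g"
    by (simp add: fun_eq_iff distrib_left)
  then show "of_real (u (f + g)) - \<i> * of_real (u (fscale \<i> (f + g))) =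
      of_real (u f) - \<i> * of_real (u (fscale \<i> f)) + (of_real (u g) - \<i> * of_real (u (fscale \<i> g)))"
    using u_add[OF f g] u_add[OF fsubspace_scale[OF V f] fsubspace_scale[OF V g]]
    by (simp add: algebra_simps)
next
  fix c f assume f: "f \<in> V"
  have u_cscale: "u (fscale c f) = Re c * u f + Im c * u (fscale \<i> f)" for c
  proof -
    have "fscale c f = fscale (of_real (Re c)) f + fscale (of_real (Im c)) (fscale \<i> f)"
      by (simp add: fun_eq_iff complex_eq_iff)
    then show ?thesis using u_add u_scale f fsubspace_scale[OF V] by simp
  qed
  have "u (fscale \<i> (fscale c f)) = - Im c * u f + Re c * u (fscale \<i> f)"
    using u_cscale[of "\<i> * c"] by (simp add: fscale_fscale mult.commute)
  then show "of_real (u (fscale c f)) - \<i> * of_real (u (fscale \<i> (fscale c f))) =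
      c * (of_real (u f) - \<i> * of_real (u (fscale \<i> f)))"
    using u_cscale[of c] by (simp add: complex_eq_iff algebra_simps)
qed

lemma clinear_on_norm_le_if_Re_le:
  assumes V: "fsubspace V" and p: "seminorm_on V p" and \<phi>: "clinear_on V \<phi>"
    and Re_le: "\<And>f. f \<in> V \<Longrightarrow> Re (\<phi> f) \<le> p f" and f: "f \<in> V"
  shows "cmod (\<phi> f) \<le> p f"
proof -
  \<comment> \<open>Rotate \<open>\<phi> f\<close> onto the positive real axis.\<close>
  obtain w where w: "cmod w = 1" "w * \<phi> f = of_real (cmod (\<phi> f))"
  proof (cases "\<phi> f = 0")
    case True
    then show ?thesis by (intro that[of 1]) auto
  next
    case False
    have "cnj (\<phi> f) * \<phi> f = of_real (cmod (\<phi> f)) * of_real (cmod (\<phi> f))"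
      by (metis complex_norm_square mult.commute of_real_mult power2_eq_square)
    with False show ?thesis
      by (intro that[of "cnj (\<phi> f) / of_real (cmod (\<phi> f))"]) (simp_all add: norm_divide field_simps)
  qed
  have "cmod (\<phi> f) = Re (\<phi> (fscale w f))"
    using clinear_on_scale[OF \<phi> f] w(2) by simp
  also have "\<dots> \<le> p (fscale w f)" using Re_le fsubspace_scale[OF V f] by blast
  also have "\<dots> = p f" using seminorm_on_scale[OF p f] w(1) by simp
  finally show ?thesis .
qed

lemma complex_Hahn_Banach:
  assumes V: "fsubspace V" and p: "seminorm_on V p" and M: "fsubspace M" "M \<subseteq> V"
    and \<phi>0: "clinear_on M \<phi>0" and \<phi>0_le: "\<And>f. f \<in> M \<Longrightarrow> cmod (\<phi>0 f) \<le> p f"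
  obtains \<phi> where "clinear_on V \<phi>" and "\<And>f. f \<in> M \<Longrightarrow> \<phi> f = \<phi>0 f"
    and "\<And>f. f \<in> V \<Longrightarrow> cmod (\<phi> f) \<le> p f"
proof -
  have Re_add: "Re (\<phi>0 (f + g)) = Re (\<phi>0 f) + Re (\<phi>0 g)" if "f \<in> M" "g \<in> M" for f g
    using clinear_on_add[OF \<phi>0 that] by simp
  have Re_scale: "Re (\<phi>0 (fscale (of_real t) f)) = t * Re (\<phi>0 f)" if "f \<in> M" for t f
    using clinear_on_scale[OF \<phi>0 that] by simp
  have Re_le: "Re (\<phi>0 f) \<le> p f" if "f \<in> M" for f
    using complex_Re_le_cmod \<phi>0_le[OF that] by (rule order_trans)
  obtain u where u_add: "\<And>f g. f \<in> V \<Longrightarrow> g \<in> V \<Longrightarrow> u (f + g) = u f + u g"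
    and u_scale: "\<And>t f. f \<in> V \<Longrightarrow> u (fscale (of_real t) f) = t * u f"
    and u_M: "\<And>f. f \<in> M \<Longrightarrow> u f = Re (\<phi>0 f)" and u_le: "\<And>f. f \<in> V \<Longrightarrow> u f \<le> p f"
    using real_Hahn_Banach[OF V p M Re_add Re_scale Re_le] by blast
  define \<phi> where "\<phi> = (\<lambda>f. of_real (u f) - \<i> * of_real (u (fscale \<i> f)))"
  have \<phi>_linear: "clinear_on V \<phi>"
    unfolding \<phi>_def by (rule clinear_on_complexification[OF V u_add u_scale])
  moreover have "\<phi> f = \<phi>0 f" if f: "f \<in> M" for f
    using u_M f u_M[OF fsubspace_scale[OF M(1) f], of \<i>] clinear_on_scale[OF \<phi>0 f, of \<i>]
    by (simp add: \<phi>_def complex_eq_iff)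
  moreover have "cmod (\<phi> f) \<le> p f" if "f \<in> V" for f
    using clinear_on_norm_le_if_Re_le[OF V p \<phi>_linear _ that] u_le by (simp add: \<phi>_def)
  ultimately show ?thesis using that by blast
qed

lemma norming_functional:
  assumes V: "fsubspace V" and p: "seminorm_on V p" and f0: "f0 \<in> V"
  obtains \<psi> where "clinear_on V \<psi>" and "\<psi> f0 = of_real (p f0)"
    and "\<And>f. f \<in> V \<Longrightarrow> cmod (\<psi> f) \<le> p f"
proof (cases "f0 = 0")
  case True
  then show ?thesis
    using that[of "\<lambda>_. 0"] seminorm_on_0[OF V p] seminorm_on_nonneg[OF V p]
    by (simp add: clinear_on_def)
next
  case False
  then obtain x0 where x0: "f0 x0 \<noteq> 0" by (auto simp: fun_eq_iff)
  define M where "M = {fscale c f0 |c. True}"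
  have M: "fsubspace M" "M \<subseteq> V"
    unfolding M_def using fsubspace_span_singleton fsubspace_scale[OF V f0] by blast+
  define L where "L f = f x0 / f0 x0 * of_real (p f0)" for f
  have L_linear: "clinear_on M L"
    unfolding clinear_on_def L_def by (simp add: algebra_simps add_divide_distrib)
  have L_le: "cmod (L f) \<le> p f" if "f \<in> M" for f
  proof -
    obtain c where c: "f = fscale c f0" using \<open>f \<in> M\<close> unfolding M_def by blast
    have "cmod (L f) = cmod c * p f0"
      using x0 seminorm_on_nonneg[OF V p f0] by (simp add: c L_def norm_mult)
    then show ?thesis using seminorm_on_scale[OF p f0] c by simp
  qed
  obtain \<psi> where \<psi>: "clinear_on V \<psi>" "\<And>f. f \<in> M \<Longrightarrow> \<psi> f = L f"
    "\<And>f. f \<in> V \<Longrightarrow> cmod (\<psi> f) \<le> p f"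
    using complex_Hahn_Banach[OF V p M L_linear L_le] by blast
  have "f0 \<in> M" unfolding M_def by (metis (mono_tags, lifting) fscale_one mem_Collect_eq)
  then have "\<psi> f0 = of_real (p f0)" using \<psi>(2) x0 by (simp add: L_def)
  then show ?thesis using that \<psi>(1,3) by blast
qed

section \<open>Quotient seminorms\<close>

definition quotient_seminorm ::
  "(('a \<Rightarrow> complex) \<Rightarrow> real) \<Rightarrow> ('a \<Rightarrow> complex) set \<Rightarrow> ('a \<Rightarrow> complex) \<Rightarrow> real" where
  "quotient_seminorm q K f = (INF k\<in>K. q (f - k))"

context
  fixes V :: "('a \<Rightarrow> complex) set" and q K
  assumes V: "fsubspace V" and q: "seminorm_on V q" and K: "fsubspace K" "K \<subseteq> V"
begin

lemma quotient_seminorm_le: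
  assumes "f \<in> V" "k \<in> K"
  shows "quotient_seminorm q K f \<le> q (f - k)"
  unfolding quotient_seminorm_def
proof (rule cINF_lower[OF _ assms(2)])
  show "bdd_below ((\<lambda>k. q (f - k)) ` K)"
    using seminorm_on_nonneg[OF V q fsubspace_diff[OF V assms(1)]] K(2)
    by (intro bdd_belowI2[of _ 0]) blast
qed

lemma quotient_seminorm_le_seminorm: "f \<in> V \<Longrightarrow> quotient_seminorm q K f \<le> q f"
  using quotient_seminorm_le[OF _ fsubspace_0[OF K(1)]] by simp

lemma quotient_seminorm_greatest:
  assumes "\<And>k. k \<in> K \<Longrightarrow> c \<le> q (f - k)"
  shows "c \<le> quotient_seminorm q K f"
  unfolding quotient_seminorm_def using fsubspace_0[OF K(1)] assms by (intro cINF_greatest) auto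

lemma quotient_seminorm_nonneg: "f \<in> V \<Longrightarrow> 0 \<le> quotient_seminorm q K f"
  using seminorm_on_nonneg[OF V q fsubspace_diff[OF V]] K(2)
  by (intro quotient_seminorm_greatest) blast

lemma quotient_seminorm_eq_0: "k \<in> K \<Longrightarrow> quotient_seminorm q K k = 0"
  using quotient_seminorm_le[of k k] quotient_seminorm_nonneg[of k] seminorm_on_0[OF V q] K(2)
  by force

lemma quotient_seminorm_lessE:
  assumes "quotient_seminorm q K f < c"
  obtains k where "k \<in> K" "q (f - k) < c"
  using assms cInf_lessD[of "(\<lambda>k. q (f - k)) ` K" c] fsubspace_0[OF K(1)] that
  unfolding quotient_seminorm_def by blast

lemma quotient_seminorm_triangle:
  assumes f: "f \<in> V" and g: "g \<in> V"
  shows "quotient_seminorm q K (f + g) \<le> quotient_seminorm q K f + quotient_seminorm q K g"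
proof -
  have "quotient_seminorm q K (f + g) \<le> q (f - k) + q (g - k')" if "k \<in> K" "k' \<in> K" for k k'
  proof -
    have "quotient_seminorm q K (f + g) \<le> q ((f - k) + (g - k'))"
      using quotient_seminorm_le[OF fsubspace_add[OF V f g] fsubspace_add[OF K(1) that]]
      by (simp add: algebra_simps)
    also have "\<dots> \<le> q (f - k) + q (g - k')"
      using that K(2) by (intro seminorm_on_triangle[OF q] fsubspace_diff[OF V]) (auto simp: f g)
    finally show ?thesis .
  qed
  then have "quotient_seminorm q K (f + g) - q (g - k') \<le> quotient_seminorm q K f"
    if "k' \<in> K" for k'
    using that by (intro quotient_seminorm_greatest) (simp add: algebra_simps)
  then have "quotient_seminorm q K (f + g) - quotient_seminorm q K f \<le> quotient_seminorm q K g"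
    by (intro quotient_seminorm_greatest) (simp add: algebra_simps)
  then show ?thesis by simp
qed

lemma quotient_seminorm_scale_le:
  assumes f: "f \<in> V"
  shows "quotient_seminorm q K (fscale c f) \<le> cmod c * quotient_seminorm q K f"
proof (cases "c = 0")
  case True
  then show ?thesis using quotient_seminorm_eq_0 fsubspace_0[OF K(1)] by simp
next
  case False
  have "quotient_seminorm q K (fscale c f) / cmod c \<le> q (f - k)" if k: "k \<in> K" for k
  proof -
    have "fscale c f - fscale c k = fscale c (f - k)"
      by (simp add: fun_eq_iff right_diff_distrib)
    then have "quotient_seminorm q K (fscale c f) \<le> q (fscale c (f - k))"
      using quotient_seminorm_le[OF fsubspace_scale[OF V f] fsubspace_scale[OF K(1) k], of c c]
      by simp
    also have "\<dots> = cmod c * q (f - k)"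
      using k K(2) by (intro seminorm_on_scale[OF q] fsubspace_diff[OF V f]) auto
    finally show ?thesis using False by (simp add: field_simps)
  qed
  then have "quotient_seminorm q K (fscale c f) / cmod c \<le> quotient_seminorm q K f"
    by (rule quotient_seminorm_greatest)
  then show ?thesis using False by (simp add: field_simps)
qed

lemma seminorm_on_quotient_seminorm: "seminorm_on V (quotient_seminorm q K)"
  using V quotient_seminorm_nonneg quotient_seminorm_triangle quotient_seminorm_scale_le
  by (rule seminorm_onI_scale_le)

end

section \<open>Finite combinations of point evaluations\<close>

definition eval_comb :: "'x set \<Rightarrow> ('x \<Rightarrow> complex) \<Rightarrow> ('x \<Rightarrow> complex) \<Rightarrow> complex" where
  "eval_comb S a f = (\<Sum>x\<in>S. a x * f x)"

definition eval_span :: "(('x \<Rightarrow> complex) \<Rightarrow> complex) set" where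
  "eval_span = {eval_comb S a |S a. finite S}"

lemma eval_comb_singleton: "eval_comb {x} (\<lambda>_. 1) = (\<lambda>f. f x)"
  by (simp add: fun_eq_iff eval_comb_def)

lemma eval_in_eval_span: "(\<lambda>f. f x) \<in> eval_span"
  unfolding eval_span_def
  by (rule CollectI, rule exI[of _ "{x}"], rule exI[of _ "\<lambda>_. 1"]) (simp add: eval_comb_singleton)

lemma eval_comb_insert:
  "finite S \<Longrightarrow> x \<notin> S \<Longrightarrow> eval_comb (insert x S) a = fscale (a x) (\<lambda>f. f x) + eval_comb S a"
  by (simp add: fun_eq_iff eval_comb_def)

lemma eval_comb_cong: "(\<And>x. x \<in> S \<Longrightarrow> f x = g x) \<Longrightarrow> eval_comb S a f = eval_comb S a g"
  by (simp add: eval_comb_def)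

lemma eval_comb_extend:
  assumes "finite T" "S \<subseteq> T"
  shows "eval_comb S a = eval_comb T (\<lambda>x. if x \<in> S then a x else 0)"
proof -
  have "(if x \<in> S then a x else 0) * f x = (if x \<in> S then a x * f x else 0)" for x f
    by simp
  then show ?thesis
    by (simp add: fun_eq_iff eval_comb_def flip: sum.inter_restrict[OF assms(1)])
      (simp add: Int_absorb1[OF assms(2)])
qed

lemma clinear_on_eval_comb: "clinear_on V (eval_comb S a)"
  unfolding clinear_on_def eval_comb_def
  by (simp add: algebra_simps sum.distrib sum_distrib_left)

lemma fsubspace_eval_span: "fsubspace (eval_span :: (('x \<Rightarrow> complex) \<Rightarrow> complex) set)"
  unfolding fsubspace_def
proof (intro conjI ballI allI)
  show "0 \<in> eval_span"
    unfolding eval_span_def by (rule CollectI, rule exI[of _ "{}"]) (simp add: fun_eq_iff eval_comb_def)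
next
  fix \<psi>\<^sub>1 \<psi>\<^sub>2 :: "('x \<Rightarrow> complex) \<Rightarrow> complex" assume "\<psi>\<^sub>1 \<in> eval_span" "\<psi>\<^sub>2 \<in> eval_span"
  then obtain S a T b where S: "finite S" "\<psi>\<^sub>1 = eval_comb S a" and T: "finite T" "\<psi>\<^sub>2 = eval_comb T b"
    unfolding eval_span_def by blast
  have "\<psi>\<^sub>1 + \<psi>\<^sub>2 = eval_comb (S \<union> T)
      (\<lambda>x. (if x \<in> S then a x else 0) + (if x \<in> T then b x else 0))"
    using eval_comb_extend[of "S \<union> T" S a] eval_comb_extend[of "S \<union> T" T b] S T
    by (simp add: fun_eq_iff eval_comb_def distrib_right sum.distrib)
  then show "\<psi>\<^sub>1 + \<psi>\<^sub>2 \<in> eval_span" unfolding eval_span_def using S T by blast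
next
  fix c \<psi> assume "\<psi> \<in> eval_span"
  then obtain S a where "finite S" "\<psi> = eval_comb S a" unfolding eval_span_def by blast
  then have "fscale c \<psi> = eval_comb S (\<lambda>x. c * a x)" "finite S"
    by (simp_all add: fun_eq_iff eval_comb_def sum_distrib_left mult.assoc)
  then show "fscale c \<psi> \<in> eval_span" unfolding eval_span_def by blast
qed

lemma norm_eval_comb_le: "cmod (eval_comb S a f) \<le> (\<Sum>x\<in>S. cmod (a x) * cmod (f x))"
  unfolding eval_comb_def by (rule order_trans[OF norm_sum]) (simp add: norm_mult)

lemma eval_comb_fun_upd [simp]: "x \<notin> S \<Longrightarrow> eval_comb S (a(x := c)) = eval_comb S a"
  by (auto simp: fun_eq_iff eval_comb_def intro!: sum.cong)

lemma clinear_on_eval: "clinear_on V (\<lambda>f. f x)"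
  by (simp add: clinear_on_def)

lemma fsubspace_point_cases:
  assumes F: "fsubspace F"
  obtains (separating) h where "h \<in> F" "\<forall>y\<in>S. h y = 0" "h x = 1"
    | (dependent) "\<And>h. h \<in> F \<Longrightarrow> \<forall>y\<in>S. h y = 0 \<Longrightarrow> h x = 0"
proof (cases "\<exists>h\<in>F. (\<forall>y\<in>S. h y = 0) \<and> h x \<noteq> 0")
  case True
  then obtain h where "h \<in> F" "\<forall>y\<in>S. h y = 0" "h x \<noteq> 0" by blast
  then show ?thesis
    using separating[of "fscale (1 / h x) h"] fsubspace_scale[OF F] by simp
next
  case False
  then show ?thesis using dependent by blast
qed

lemma clinear_on_comp_projection:
  assumes F: "fsubspace F" and \<psi>: "clinear_on F \<psi>" and h: "h \<in> F"
  shows "clinear_on F (\<lambda>f. \<psi> (f - fscale (f x) h))"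
  unfolding clinear_on_def
proof (intro conjI ballI allI)
  have proj: "f - fscale (f x) h \<in> F" if "f \<in> F" for f
    using fsubspace_diff[OF F that fsubspace_scale[OF F h]] .
  fix f g assume f: "f \<in> F" and g: "g \<in> F"
  have "(f + g) - fscale ((f + g) x) h = (f - fscale (f x) h) + (g - fscale (g x) h)"
    by (simp add: fun_eq_iff algebra_simps)
  then show "\<psi> ((f + g) - fscale ((f + g) x) h) = \<psi> (f - fscale (f x) h) + \<psi> (g - fscale (g x) h)"
    by (simp only: clinear_on_add[OF \<psi> proj[OF f] proj[OF g]])
next
  fix c f assume f: "f \<in> F"
  have "fscale c f - fscale (fscale c f x) h = fscale c (f - fscale (f x) h)"
    by (simp add: fun_eq_iff algebra_simps)
  then show "\<psi> (fscale c f - fscale (fscale c f x) h) = c * \<psi> (f - fscale (f x) h)"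
    by (simp only: clinear_on_scale[OF \<psi> fsubspace_diff[OF F f fsubspace_scale[OF F h]]])
qed

lemma clinear_on_eq_eval_comb:
  assumes F: "fsubspace F" and S: "finite S"
  shows "clinear_on F \<psi> \<Longrightarrow> (\<And>f. f \<in> F \<Longrightarrow> \<forall>x\<in>S. f x = 0 \<Longrightarrow> \<psi> f = 0)
    \<Longrightarrow> \<exists>a. \<forall>f\<in>F. \<psi> f = eval_comb S a f"
  using S
proof (induction S arbitrary: \<psi> rule: finite_induct)
  case empty
  then show ?case by (simp add: eval_comb_def)
next
  case (insert x S)
  note \<psi> = insert.prems(1) and vanish = insert.prems(2)
  from F show ?case
  proof (cases rule: fsubspace_point_cases[where S = S and x = x])
    case (separating h)
    \<comment> \<open>Subtracting \<open>f x \<cdot> h\<close> moves \<open>f\<close> into the common kernel of the evaluations at \<open>insert x S\<close>.\<close>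
    define \<psi>' where "\<psi>' = (\<lambda>f. \<psi> (f - fscale (f x) h))"
    have proj: "f - fscale (f x) h \<in> F" if "f \<in> F" for f
      using fsubspace_diff[OF F that fsubspace_scale[OF F separating(1)]] .
    have "clinear_on F \<psi>'"
      unfolding \<psi>'_def by (rule clinear_on_comp_projection[OF F \<psi> separating(1)])
    moreover have "\<psi>' f = 0" if "f \<in> F" "\<forall>y\<in>S. f y = 0" for f
      unfolding \<psi>'_def using that separating by (intro vanish proj) auto
    ultimately obtain a where a: "\<forall>f\<in>F. \<psi>' f = eval_comb S a f"
      using insert.IH by blast
    have "\<psi> f = eval_comb (insert x S) (a(x := \<psi> h)) f" if f: "f \<in> F" for f
    proof -
      have "\<psi> f = \<psi> ((f - fscale (f x) h) + fscale (f x) h)" by simp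
      also have "\<dots> = \<psi>' f + \<psi> (fscale (f x) h)"
        unfolding \<psi>'_def by (rule clinear_on_add[OF \<psi> proj[OF f] fsubspace_scale[OF F separating(1)]])
      also have "\<psi> (fscale (f x) h) = f x * \<psi> h"
        by (rule clinear_on_scale[OF \<psi> separating(1)])
      finally show ?thesis using a f insert(1,2) by (simp add: eval_comb_insert)
    qed
    then show ?thesis by blast
  next
    case dependent
    then obtain a where a: "\<forall>f\<in>F. \<psi> f = eval_comb S a f"
      using insert.IH[OF \<psi>] vanish by (metis insert_iff)
    then have "\<forall>f\<in>F. \<psi> f = eval_comb (insert x S) (a(x := 0)) f"
      using insert(1,2) by (simp add: eval_comb_insert)
    then show ?thesis by blast
  qed
qed

lemma fsubspace_interpolation:
  assumes F: "fsubspace F" and S: "finite S"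
    and compatible: "\<And>T b. finite T \<Longrightarrow> \<forall>f\<in>F. eval_comb T b f = 0 \<Longrightarrow> eval_comb T b g = 0"
  shows "\<exists>f\<in>F. \<forall>x\<in>S. f x = g x"
  using S
proof (induction S rule: finite_induct)
  case empty
  then show ?case using fsubspace_0[OF F] by blast
next
  case (insert x S)
  then obtain f0 where f0: "f0 \<in> F" "\<forall>y\<in>S. f0 y = g y" by blast
  from F show ?case
  proof (cases rule: fsubspace_point_cases[where S = S and x = x])
    case (separating h)
    define f where "f = f0 + fscale (g x - f0 x) h"
    have "f \<in> F"
      unfolding f_def using fsubspace_add[OF F f0(1) fsubspace_scale[OF F separating(1)]] .
    moreover have "\<forall>y\<in>insert x S. f y = g y" unfolding f_def using f0(2) separating by simp
    ultimately show ?thesis by blast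
  next
    case dependent
    then obtain a where a: "\<forall>f\<in>F. f x = eval_comb S a f"
      using clinear_on_eq_eval_comb[OF F insert(1) clinear_on_eval] by blast
    \<comment> \<open>The evaluation at \<open>x\<close> is a combination of those on \<open>S\<close>, and \<open>g\<close> respects this relation.\<close>
    have "\<forall>f\<in>F. eval_comb (insert x S) (a(x := -1)) f = 0"
      using a insert(1,2) by (simp add: eval_comb_insert)
    then have "eval_comb (insert x S) (a(x := -1)) g = 0"
      using compatible insert(1) by blast
    then have "g x = eval_comb S a f0"
      using insert(1,2) eval_comb_cong[of S g f0 a] f0(2) by (simp add: eval_comb_insert)
    then show ?thesis using a f0 by auto
  qed
qed

section \<open>The topology of pointwise convergence\<close>

lemma closure_pointwise_approx:
  fixes g :: "'a \<Rightarrow> 'b::metric_space"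
  assumes "g \<in> closure A" "finite S" "0 < e"
  obtains f where "f \<in> A" "\<And>x. x \<in> S \<Longrightarrow> dist (f x) (g x) < e"
proof -
  define U where "U = {f. \<forall>x\<in>S. f (id x) \<in> ball (g x) e}"
  have "open U"
    unfolding U_def using assms(2) by (intro product_topology_basis') auto
  moreover have "g \<in> U" unfolding U_def using assms(3) by simp
  ultimately have "A \<inter> U \<noteq> {}"
    using assms(1) unfolding closure_iff_nhds_not_empty by blast
  then obtain f where "f \<in> A" "f \<in> U" by blast
  then show ?thesis using that unfolding U_def by (auto simp: dist_commute)
qed

lemma in_closure_if_interpolated:
  fixes g :: "'a \<Rightarrow> 'b::topological_space"
  assumes interpolated: "\<And>S. finite S \<Longrightarrow> \<exists>f\<in>A. \<forall>x\<in>S. f x = g x"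
  shows "g \<in> closure A"
  unfolding closure_iff_nhds_not_empty
proof (intro allI impI)
  fix U T assume "T \<subseteq> U" "open T" "g \<in> T"
  then obtain X where X: "g \<in> Pi\<^sub>E UNIV X" "\<And>i. open (X i)" "finite {i. X i \<noteq> UNIV}"
    "Pi\<^sub>E UNIV X \<subseteq> T"
    using product_topology_open_contains_basis[of "\<lambda>_. euclidean" UNIV T g]
    unfolding open_fun_def by auto
  obtain f where "f \<in> A" "\<forall>x\<in>{i. X i \<noteq> UNIV}. f x = g x" using interpolated X(3) by blast
  then have "f \<in> Pi\<^sub>E UNIV X" using X(1) by (auto simp: PiE_iff) (metis UNIV_I)
  then show "A \<inter> U \<noteq> {}" using \<open>f \<in> A\<close> X(4) \<open>T \<subseteq> U\<close> by blast
qed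

lemma mem_dual_space_iff:
  "\<phi> \<in> dual_space F N \<longleftrightarrow> clinear_on F \<phi> \<and> (\<exists>C. \<forall>f\<in>F. cmod (\<phi> f) \<le> C * N f)"
  unfolding dual_space_def clinear_on_def fscale_def plus_fun_def by simp

lemma mem_bidual_space_iff:
  "\<Phi> \<in> bidual_space F N \<longleftrightarrow> clinear_on (dual_space F N) \<Phi> \<and>
     (\<exists>C. \<forall>\<phi>\<in>dual_space F N. cmod (\<Phi> \<phi>) \<le> C * dual_norm F N \<phi>)"
  unfolding bidual_space_def clinear_on_def fscale_def plus_fun_def by simp

lemma eval_closed_span_iff:
  "\<phi> \<in> eval_closed_span F N \<longleftrightarrow>
     \<phi> \<in> dual_space F N \<and> (\<forall>\<epsilon>>0. \<exists>\<psi>\<in>eval_span. dual_norm F N (\<phi> - \<psi>) < \<epsilon>)"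
proof -
  have eq: "(\<lambda>f. \<phi> f - (\<Sum>x\<in>S. a x * f x)) = \<phi> - eval_comb S a" for S a
    by (simp add: fun_eq_iff eval_comb_def)
  show ?thesis unfolding eval_closed_span_def eval_span_def mem_Collect_eq eq by blast
qed

definition point_function :: "((('x \<Rightarrow> complex) \<Rightarrow> complex) \<Rightarrow> complex) \<Rightarrow> 'x \<Rightarrow> complex" where
  "point_function \<Phi> = (\<lambda>x. \<Phi> (\<lambda>f. f x))"

locale normed_fun_space =
  fixes F :: "('x \<Rightarrow> complex) set" and N :: "('x \<Rightarrow> complex) \<Rightarrow> real"
  assumes normed_function_space: "normed_function_space F N"
begin

lemma fsubspace_F: "fsubspace F"
  using normed_function_space
  unfolding normed_function_space_def fsubspace_def fscale_def plus_fun_def zero_fun_def by simp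

lemma seminorm_on_N: "seminorm_on F N"
  using normed_function_space unfolding normed_function_space_def seminorm_on_def fscale_def plus_fun_def
  by simp

lemma N_nonneg: "f \<in> F \<Longrightarrow> 0 \<le> N f"
  using seminorm_on_nonneg[OF fsubspace_F seminorm_on_N] .

lemma N_eq_0_iff: "f \<in> F \<Longrightarrow> N f = 0 \<longleftrightarrow> f = 0"
  using normed_function_space unfolding normed_function_space_def by (simp add: zero_fun_def)

lemma eval_bounded: "\<exists>C. \<forall>f\<in>F. cmod (f x) \<le> C * N f"
  using normed_function_space unfolding normed_function_space_def by blast

lemma dual_space_clinear_on: "\<phi> \<in> dual_space F N \<Longrightarrow> clinear_on F \<phi>"
  by (simp add: mem_dual_space_iff)

lemma dual_norm_upper:
  assumes \<phi>: "\<phi> \<in> dual_space F N" and f: "f \<in> F" "N f \<le> 1"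
  shows "cmod (\<phi> f) \<le> dual_norm F N \<phi>"
proof -
  obtain C where C: "\<And>f. f \<in> F \<Longrightarrow> cmod (\<phi> f) \<le> C * N f"
    using \<phi> unfolding mem_dual_space_iff by blast
  have "cmod (\<phi> h) \<le> max C 0" if "h \<in> {f\<in>F. N f \<le> 1}" for h
  proof -
    have "cmod (\<phi> h) \<le> C * N h" using C that by blast
    also have "\<dots> \<le> max C 0 * N h" using N_nonneg that by (intro mult_right_mono) auto
    also have "\<dots> \<le> max C 0" using that by (simp add: mult_left_le)
    finally show ?thesis .
  qed
  then have "bdd_above ((\<lambda>f. cmod (\<phi> f)) ` {f\<in>F. N f \<le> 1})" by (rule bdd_aboveI2)
  then show ?thesis unfolding dual_norm_def using f by (intro cSUP_upper) auto
qed

lemma dual_norm_nonneg: "\<phi> \<in> dual_space F N \<Longrightarrow> 0 \<le> dual_norm F N \<phi>"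
  using dual_norm_upper[OF _ fsubspace_0[OF fsubspace_F]] seminorm_on_0[OF fsubspace_F seminorm_on_N]
  by (metis norm_ge_zero order_trans zero_less_one_class.zero_le_one)

lemma dual_norm_bound:
  assumes \<phi>: "\<phi> \<in> dual_space F N" and f: "f \<in> F"
  shows "cmod (\<phi> f) \<le> dual_norm F N \<phi> * N f"
proof (cases "N f = 0")
  case True
  then have "f = 0" using N_eq_0_iff f by blast
  moreover have "\<phi> 0 = 0" using clinear_on_0[OF dual_space_clinear_on[OF \<phi>] fsubspace_F] .
  ultimately show ?thesis using True by simp
next
  case False
  then have Nf: "N f > 0" using N_nonneg[OF f] by simp
  have "cmod (\<phi> (fscale (of_real (1 / N f)) f)) \<le> dual_norm F N \<phi>"
    using Nf seminorm_on_scale[OF seminorm_on_N f] fsubspace_scale[OF fsubspace_F f]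
    by (intro dual_norm_upper[OF \<phi>]) (auto simp: norm_divide)
  moreover have "\<phi> (fscale (of_real (1 / N f)) f) = \<phi> f / of_real (N f)"
    by (simp add: clinear_on_scale[OF dual_space_clinear_on[OF \<phi>] f])
  ultimately have "cmod (\<phi> f) / N f \<le> dual_norm F N \<phi>"
    using Nf by (simp add: norm_divide)
  then show ?thesis using Nf by (simp add: divide_le_eq mult.commute)
qed

lemma add_dual_norm_bound:
  assumes "\<phi> \<in> dual_space F N" "\<psi> \<in> dual_space F N" "f \<in> F"
  shows "cmod ((\<phi> + \<psi>) f) \<le> (dual_norm F N \<phi> + dual_norm F N \<psi>) * N f"
  using norm_triangle_ineq[of "\<phi> f" "\<psi> f"] dual_norm_bound[OF assms(1,3)] dual_norm_bound[OF assms(2,3)]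
  by (simp add: distrib_right)

lemma scale_dual_norm_bound:
  assumes "\<phi> \<in> dual_space F N" "f \<in> F"
  shows "cmod (fscale c \<phi> f) \<le> (cmod c * dual_norm F N \<phi>) * N f"
proof -
  have "cmod (fscale c \<phi> f) = cmod c * cmod (\<phi> f)" by (simp add: norm_mult)
  also have "\<dots> \<le> cmod c * (dual_norm F N \<phi> * N f)"
    using dual_norm_bound[OF assms] by (rule mult_left_mono) simp
  finally show ?thesis by (simp add: mult.assoc)
qed

lemma dual_norm_le:
  assumes "0 \<le> c" and bound: "\<And>f. f \<in> F \<Longrightarrow> cmod (\<phi> f) \<le> c * N f"
  shows "dual_norm F N \<phi> \<le> c"
  unfolding dual_norm_def
proof (rule cSUP_least)
  show "{f \<in> F. N f \<le> 1} \<noteq> {}"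
    using fsubspace_0[OF fsubspace_F] seminorm_on_0[OF fsubspace_F seminorm_on_N] by auto
next
  fix f assume "f \<in> {f \<in> F. N f \<le> 1}"
  then have "cmod (\<phi> f) \<le> c * N f" and "N f \<le> 1" using bound by auto
  then show "cmod (\<phi> f) \<le> c" using \<open>0 \<le> c\<close> by (meson mult_left_le order_trans)
qed

lemma fsubspace_dual_space: "fsubspace (dual_space F N)"
  unfolding fsubspace_def mem_dual_space_iff
proof (intro conjI ballI allI)
  show "clinear_on F 0" "\<exists>C. \<forall>f\<in>F. cmod (0 f) \<le> C * N f"
    by (auto simp: clinear_on_def intro: exI[of _ 0])
next
  fix \<phi> \<psi> assume \<phi>: "\<phi> \<in> dual_space F N" and \<psi>: "\<psi> \<in> dual_space F N"
  then show "clinear_on F (\<phi> + \<psi>)"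
    by (simp add: mem_dual_space_iff clinear_on_def algebra_simps)
  show "\<exists>C. \<forall>f\<in>F. cmod ((\<phi> + \<psi>) f) \<le> C * N f"
    using add_dual_norm_bound[OF \<phi> \<psi>] by blast
next
  fix c \<phi> assume \<phi>: "\<phi> \<in> dual_space F N"
  then show "clinear_on F (fscale c \<phi>)"
    by (simp add: mem_dual_space_iff clinear_on_def algebra_simps)
  show "\<exists>C. \<forall>f\<in>F. cmod (fscale c \<phi> f) \<le> C * N f"
    using scale_dual_norm_bound[OF \<phi>] by blast
qed

lemma seminorm_on_dual_norm: "seminorm_on (dual_space F N) (dual_norm F N)"
proof (rule seminorm_onI_scale_le[OF fsubspace_dual_space dual_norm_nonneg])
  fix \<phi> \<psi> assume \<phi>: "\<phi> \<in> dual_space F N" and \<psi>: "\<psi> \<in> dual_space F N"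
  show "dual_norm F N (\<phi> + \<psi>) \<le> dual_norm F N \<phi> + dual_norm F N \<psi>"
  proof (rule dual_norm_le)
    show "0 \<le> dual_norm F N \<phi> + dual_norm F N \<psi>"
      using dual_norm_nonneg[OF \<phi>] dual_norm_nonneg[OF \<psi>] by simp
    show "cmod ((\<phi> + \<psi>) f) \<le> (dual_norm F N \<phi> + dual_norm F N \<psi>) * N f" if "f \<in> F" for f
      using add_dual_norm_bound[OF \<phi> \<psi> that] .
  qed
next
  fix c \<phi> assume \<phi>: "\<phi> \<in> dual_space F N"
  show "dual_norm F N (fscale c \<phi>) \<le> cmod c * dual_norm F N \<phi>"
    using dual_norm_nonneg[OF \<phi>] scale_dual_norm_bound[OF \<phi>] by (intro dual_norm_le) auto
qed

lemma eval_comb_in_dual_space: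
  assumes "finite S"
  shows "eval_comb S a \<in> dual_space F N"
proof -
  have "\<forall>x. \<exists>C. \<forall>f\<in>F. cmod (f x) \<le> C * N f"
    using eval_bounded by blast
  from choice[OF this] obtain C where C: "\<forall>x. \<forall>f\<in>F. cmod (f x) \<le> C x * N f"
    by blast
  have "cmod (eval_comb S a f) \<le> (\<Sum>x\<in>S. cmod (a x) * C x) * N f" if "f \<in> F" for f
  proof -
    have "cmod (eval_comb S a f) \<le> (\<Sum>x\<in>S. cmod (a x) * (C x * N f))"
      using C that by (intro order_trans[OF norm_eval_comb_le] sum_mono mult_left_mono) simp_all
    also have "\<dots> = (\<Sum>x\<in>S. cmod (a x) * C x) * N f"
      by (simp add: sum_distrib_right mult.assoc)
    finally show ?thesis .
  qed
  then show ?thesis unfolding mem_dual_space_iff using clinear_on_eval_comb by blast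
qed

lemma eval_span_subset_dual_space: "eval_span \<subseteq> dual_space F N"
proof
  fix \<psi> :: "('x \<Rightarrow> complex) \<Rightarrow> complex" assume "\<psi> \<in> eval_span"
  then obtain S a where "finite S" "\<psi> = eval_comb S a" unfolding eval_span_def by blast
  then show "\<psi> \<in> dual_space F N" by (simp add: eval_comb_in_dual_space)
qed

lemma eval_in_dual_space: "(\<lambda>f. f x) \<in> dual_space F N"
  using eval_span_subset_dual_space eval_in_eval_span by (rule subsetD)

section \<open>Reflexivity\<close>

lemma in_bidual_spaceI:
  assumes "clinear_on (dual_space F N) \<Phi>"
    and "\<And>\<phi>. \<phi> \<in> dual_space F N \<Longrightarrow> cmod (\<Phi> \<phi>) \<le> dual_norm F N \<phi>"
  shows "\<Phi> \<in> bidual_space F N"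
  using assms unfolding mem_bidual_space_iff by (intro conjI exI[of _ 1]) auto

lemma bidual_space_bound:
  assumes "\<Phi> \<in> bidual_space F N"
  obtains C where "0 \<le> C" "\<And>\<phi>. \<phi> \<in> dual_space F N \<Longrightarrow> cmod (\<Phi> \<phi>) \<le> C * dual_norm F N \<phi>"
proof -
  obtain C where C: "\<forall>\<phi>\<in>dual_space F N. cmod (\<Phi> \<phi>) \<le> C * dual_norm F N \<phi>"
    using assms unfolding mem_bidual_space_iff by blast
  have "cmod (\<Phi> \<phi>) \<le> max C 0 * dual_norm F N \<phi>" if "\<phi> \<in> dual_space F N" for \<phi>
    using C that dual_norm_nonneg[OF that] by (meson max.cobounded1 mult_right_mono order_trans)
  then show ?thesis using that[of "max C 0"] by simp
qed

lemma reflexive_point_function: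
  assumes "reflexive_fs F N" "\<Phi> \<in> bidual_space F N"
  shows "point_function \<Phi> \<in> F" and "\<And>\<phi>. \<phi> \<in> dual_space F N \<Longrightarrow> \<Phi> \<phi> = \<phi> (point_function \<Phi>)"
proof -
  obtain f where f: "f \<in> F" "\<forall>\<phi>\<in>dual_space F N. \<Phi> \<phi> = \<phi> f"
    using assms unfolding reflexive_fs_def by blast
  then have "point_function \<Phi> = f"
    using eval_in_dual_space by (simp add: fun_eq_iff point_function_def)
  then show "point_function \<Phi> \<in> F" "\<And>\<phi>. \<phi> \<in> dual_space F N \<Longrightarrow> \<Phi> \<phi> = \<phi> (point_function \<Phi>)"
    using f by auto
qed

lemma bidual_eval_comb:
  assumes \<Phi>: "clinear_on (dual_space F N) \<Phi>" and S: "finite S"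
  shows "\<Phi> (eval_comb S a) = eval_comb S a (point_function \<Phi>)"
  using S
proof (induction S rule: finite_induct)
  case empty
  have empty: "eval_comb {} a = 0" by (simp add: fun_eq_iff eval_comb_def)
  show ?case unfolding empty clinear_on_0[OF \<Phi> fsubspace_dual_space] by simp
next
  case (insert x S)
  have "\<Phi> (eval_comb (insert x S) a) = \<Phi> (fscale (a x) (\<lambda>f. f x)) + \<Phi> (eval_comb S a)"
    unfolding eval_comb_insert[OF insert(1,2)]
    by (rule clinear_on_add[OF \<Phi> fsubspace_scale[OF fsubspace_dual_space eval_in_dual_space]
          eval_comb_in_dual_space[OF insert(1)]])
  also have "\<dots> = a x * point_function \<Phi> x + eval_comb S a (point_function \<Phi>)"
    using clinear_on_scale[OF \<Phi> eval_in_dual_space] insert(3) by (simp add: point_function_def)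
  also have "\<dots> = eval_comb (insert x S) a (point_function \<Phi>)"
    using insert(1,2) by (simp add: eval_comb_def)
  finally show ?case .
qed

lemma eval_closed_span_eq_dual_space_if_reflexive:
  assumes reflexive: "reflexive_fs F N"
  shows "eval_closed_span F N = dual_space F N"
proof
  show "eval_closed_span F N \<subseteq> dual_space F N" by (auto simp: eval_closed_span_iff)
  show "dual_space F N \<subseteq> eval_closed_span F N"
  proof (rule subsetI, rule ccontr)
    fix \<phi>0 assume \<phi>0: "\<phi>0 \<in> dual_space F N" and "\<phi>0 \<notin> eval_closed_span F N"
    then obtain \<epsilon> where "0 < \<epsilon>" and far: "\<And>\<psi>. \<psi> \<in> eval_span \<Longrightarrow> \<epsilon> \<le> dual_norm F N (\<phi>0 - \<psi>)"
      unfolding eval_closed_span_iff by (meson not_less)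
    note quotient = fsubspace_dual_space seminorm_on_dual_norm fsubspace_eval_span
      eval_span_subset_dual_space
    define p where "p = quotient_seminorm (dual_norm F N) eval_span"
    obtain \<Psi> where \<Psi>: "clinear_on (dual_space F N) \<Psi>" "\<Psi> \<phi>0 = of_real (p \<phi>0)"
      "\<And>\<phi>. \<phi> \<in> dual_space F N \<Longrightarrow> cmod (\<Psi> \<phi>) \<le> p \<phi>"
      using norming_functional[OF fsubspace_dual_space seminorm_on_quotient_seminorm[OF quotient] \<phi>0]
      unfolding p_def by blast
    have \<Psi>_bidual: "\<Psi> \<in> bidual_space F N"
      using \<Psi>(1) \<Psi>(3) quotient_seminorm_le_seminorm[OF quotient]
      by (intro in_bidual_spaceI) (auto simp: p_def intro: order_trans)
    have "point_function \<Psi> = 0"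
      using \<Psi>(3)[OF eval_in_dual_space] quotient_seminorm_eq_0[OF quotient eval_in_eval_span]
      by (simp add: fun_eq_iff point_function_def p_def)
    then have "\<Psi> \<phi>0 = 0"
      using reflexive_point_function(2)[OF reflexive \<Psi>_bidual \<phi>0]
        clinear_on_0[OF dual_space_clinear_on[OF \<phi>0] fsubspace_F] by simp
    moreover have "\<epsilon> \<le> p \<phi>0"
      unfolding p_def using far by (rule quotient_seminorm_greatest[OF quotient])
    ultimately show False using \<Psi>(2) \<open>0 < \<epsilon>\<close> by simp
  qed
qed

lemma norming_dual_functional:
  assumes "f \<in> F"
  obtains \<psi> where "\<psi> \<in> dual_space F N" "dual_norm F N \<psi> \<le> 1" "\<psi> f = of_real (N f)"
proof -
  obtain \<psi> where \<psi>: "clinear_on F \<psi>" "\<psi> f = of_real (N f)" "\<And>h. h \<in> F \<Longrightarrow> cmod (\<psi> h) \<le> N h"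
    using norming_functional[OF fsubspace_F seminorm_on_N assms] by blast
  have "\<psi> \<in> dual_space F N"
    unfolding mem_dual_space_iff using \<psi>(1,3) by (intro conjI exI[of _ 1]) auto
  moreover have "dual_norm F N \<psi> \<le> 1" using \<psi>(3) by (intro dual_norm_le) auto
  ultimately show ?thesis using that \<psi>(2) by blast
qed

lemma eval_comb_le_dual_norm_if_in_closure:
  assumes g: "g \<in> closure {f \<in> F. N f \<le> 1}" and S: "finite S"
  shows "cmod (eval_comb S a g) \<le> dual_norm F N (eval_comb S a)"
proof (rule field_le_epsilon)
  fix e :: real assume "0 < e"
  define A where "A = (\<Sum>x\<in>S. cmod (a x)) + 1"
  have "0 < A" unfolding A_def by (simp add: add_nonneg_pos sum_nonneg)
  then obtain f where f: "f \<in> {f \<in> F. N f \<le> 1}" and close: "\<And>x. x \<in> S \<Longrightarrow> dist (f x) (g x) < e / A"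
    using closure_pointwise_approx[OF g S] \<open>0 < e\<close> by (metis divide_pos_pos)
  have "eval_comb S a g = eval_comb S a f + eval_comb S a (g - f)"
    by (simp add: eval_comb_def algebra_simps flip: sum.distrib)
  then have "cmod (eval_comb S a g) \<le> cmod (eval_comb S a f) + cmod (eval_comb S a (g - f))"
    by (simp add: norm_triangle_ineq)
  also have "cmod (eval_comb S a f) \<le> dual_norm F N (eval_comb S a)"
    using f by (intro dual_norm_upper[OF eval_comb_in_dual_space[OF S]]) auto
  also have "cmod (eval_comb S a (g - f)) \<le> (\<Sum>x\<in>S. cmod (a x) * (e / A))"
    using close
    by (intro order_trans[OF norm_eval_comb_le] sum_mono mult_left_mono)
      (simp_all add: dist_norm norm_minus_commute less_imp_le)
  also have "\<dots> = (\<Sum>x\<in>S. cmod (a x)) * (e / A)"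
    by (rule sum_distrib_right[symmetric])
  also have "\<dots> \<le> A * (e / A)"
    using \<open>0 < e\<close> \<open>0 < A\<close> by (intro mult_right_mono) (simp_all add: A_def)
  finally show "cmod (eval_comb S a g) \<le> dual_norm F N (eval_comb S a) + e"
    using \<open>0 < A\<close> by simp
qed

lemma regular_if_reflexive:
  assumes reflexive: "reflexive_fs F N"
  shows "regular_fs F N"
  unfolding regular_fs_def
proof (rule closure_subset_eq[THEN iffD1], rule subsetI)
  fix g assume g: "g \<in> closure {f \<in> F. N f \<le> 1}"
  have "clinear_on eval_span (\<lambda>\<psi>. \<psi> g)" by (rule clinear_on_eval)
  moreover have "cmod (\<psi> g) \<le> dual_norm F N \<psi>" if "\<psi> \<in> eval_span" for \<psi>
    using that eval_comb_le_dual_norm_if_in_closure[OF g] unfolding eval_span_def by blast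
  ultimately obtain \<Phi> where \<Phi>: "clinear_on (dual_space F N) \<Phi>"
    "\<And>\<psi>. \<psi> \<in> eval_span \<Longrightarrow> \<Phi> \<psi> = \<psi> g"
    "\<And>\<phi>. \<phi> \<in> dual_space F N \<Longrightarrow> cmod (\<Phi> \<phi>) \<le> dual_norm F N \<phi>"
    using complex_Hahn_Banach[OF fsubspace_dual_space seminorm_on_dual_norm fsubspace_eval_span
        eval_span_subset_dual_space] by blast
  have \<Phi>_bidual: "\<Phi> \<in> bidual_space F N" using \<Phi>(1,3) by (rule in_bidual_spaceI)
  have "point_function \<Phi> = g"
    using \<Phi>(2)[OF eval_in_eval_span] by (simp add: fun_eq_iff point_function_def)
  then have gF: "g \<in> F" and \<Phi>_eq: "\<And>\<phi>. \<phi> \<in> dual_space F N \<Longrightarrow> \<Phi> \<phi> = \<phi> g"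
    using reflexive_point_function[OF reflexive \<Phi>_bidual] by auto
  obtain \<psi> where \<psi>: "\<psi> \<in> dual_space F N" "dual_norm F N \<psi> \<le> 1" "\<psi> g = of_real (N g)"
    using norming_dual_functional[OF gF] by blast
  have "N g = cmod (\<Phi> \<psi>)" using \<Phi>_eq[OF \<psi>(1)] \<psi>(3) N_nonneg[OF gF] by simp
  also have "\<dots> \<le> 1" using \<Phi>(3)[OF \<psi>(1)] \<psi>(2) by linarith
  finally show "g \<in> {f \<in> F. N f \<le> 1}" using gF by simp
qed

context
  fixes \<Phi> C
  assumes \<Phi>_linear: "clinear_on (dual_space F N) \<Phi>" and C_nonneg: "0 \<le> C"
    and \<Phi>_bound: "\<And>\<phi>. \<phi> \<in> dual_space F N \<Longrightarrow> cmod (\<Phi> \<phi>) \<le> C * dual_norm F N \<phi>"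
begin

lemma eval_comb_point_function_eq_0:
  assumes T: "finite T" and vanish: "\<forall>f\<in>F. eval_comb T b f = 0"
  shows "eval_comb T b (point_function \<Phi>) = 0"
proof -
  have "dual_norm F N (eval_comb T b) \<le> 0" using vanish by (intro dual_norm_le) auto
  then have "cmod (\<Phi> (eval_comb T b)) \<le> 0"
    using \<Phi>_bound[OF eval_comb_in_dual_space[OF T]] C_nonneg
    by (meson mult_nonneg_nonpos order_trans)
  then show ?thesis using bidual_eval_comb[OF \<Phi>_linear T] by simp
qed

lemma point_function_bounded_interpolation:
  assumes S: "finite S"
  shows "\<exists>f\<in>F. (\<forall>x\<in>S. f x = point_function \<Phi> x) \<and> N f < C + 1"
proof -
  obtain f0 where f0: "f0 \<in> F" "\<forall>x\<in>S. f0 x = point_function \<Phi> x"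
    using fsubspace_interpolation[OF fsubspace_F S eval_comb_point_function_eq_0] by blast
  define K where "K = {f \<in> F. \<forall>x\<in>S. f x = 0}"
  have "fsubspace K" "K \<subseteq> F"
    unfolding K_def fsubspace_def using fsubspace_0[OF fsubspace_F] fsubspace_add[OF fsubspace_F]
      fsubspace_scale[OF fsubspace_F] by auto
  note quotient = fsubspace_F seminorm_on_N this
  obtain \<psi> where \<psi>: "clinear_on F \<psi>" "\<psi> f0 = of_real (quotient_seminorm N K f0)"
    "\<And>f. f \<in> F \<Longrightarrow> cmod (\<psi> f) \<le> quotient_seminorm N K f"
    using norming_functional[OF fsubspace_F seminorm_on_quotient_seminorm[OF quotient] f0(1)] by blast
  have "\<psi> f = 0" if "f \<in> F" "\<forall>x\<in>S. f x = 0" for f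
    using \<psi>(3)[OF that(1)] quotient_seminorm_eq_0[OF quotient, of f] that unfolding K_def by simp
  then obtain a where a: "\<forall>f\<in>F. \<psi> f = eval_comb S a f"
    using clinear_on_eq_eval_comb[OF fsubspace_F S \<psi>(1)] by blast
  have "dual_norm F N (eval_comb S a) \<le> 1"
    using a \<psi>(3) quotient_seminorm_le_seminorm[OF quotient] by (intro dual_norm_le) (auto intro: order_trans)
  have "quotient_seminorm N K f0 = cmod (eval_comb S a f0)"
    using \<psi>(2) a f0(1) quotient_seminorm_nonneg[OF quotient f0(1)] by simp
  also have "eval_comb S a f0 = \<Phi> (eval_comb S a)"
    using eval_comb_cong[of S f0 "point_function \<Phi>" a] f0(2) bidual_eval_comb[OF \<Phi>_linear S] by simp
  also have "cmod (\<Phi> (eval_comb S a)) \<le> C * dual_norm F N (eval_comb S a)"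
    by (rule \<Phi>_bound[OF eval_comb_in_dual_space[OF S]])
  also have "\<dots> \<le> C"
    using \<open>dual_norm F N (eval_comb S a) \<le> 1\<close> C_nonneg by (simp add: mult_left_le)
  finally have "quotient_seminorm N K f0 < C + 1" by simp
  then obtain k where "k \<in> K" "N (f0 - k) < C + 1"
    using quotient_seminorm_lessE[OF quotient] by blast
  then show ?thesis
    using f0 fsubspace_diff[OF fsubspace_F f0(1), of k] unfolding K_def by (intro bexI[of _ "f0 - k"]) auto
qed

lemma point_function_in_if_regular:
  assumes regular: "regular_fs F N"
  shows "point_function \<Phi> \<in> F"
proof -
  define r where "r = 1 / (C + 1)"
  have "0 \<le> r" using C_nonneg by (simp add: r_def)
  have "fscale (of_real r) (point_function \<Phi>) \<in> closure {f \<in> F. N f \<le> 1}"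
  proof (rule in_closure_if_interpolated)
    fix S :: "'x set" assume "finite S"
    then obtain f where f: "f \<in> F" "\<forall>x\<in>S. f x = point_function \<Phi> x" "N f < C + 1"
      using point_function_bounded_interpolation by blast
    have "N (fscale (of_real r) f) = r * N f"
      using seminorm_on_scale[OF seminorm_on_N f(1)] \<open>0 \<le> r\<close> by simp
    also have "\<dots> \<le> 1" using f(3) C_nonneg by (simp add: r_def field_simps)
    finally have "fscale (of_real r) f \<in> {f \<in> F. N f \<le> 1}"
      using fsubspace_scale[OF fsubspace_F f(1)] by simp
    then show "\<exists>h\<in>{f \<in> F. N f \<le> 1}. \<forall>x\<in>S. h x = fscale (of_real r) (point_function \<Phi>) x"
      using f(2) by auto
  qed
  then have "fscale (of_real r) (point_function \<Phi>) \<in> F"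
    using regular unfolding regular_fs_def by (simp add: closure_closed)
  then have "fscale (of_real (C + 1)) (fscale (of_real r) (point_function \<Phi>)) \<in> F"
    by (rule fsubspace_scale[OF fsubspace_F])
  moreover have "(C + 1) * r = 1" using C_nonneg by (simp add: r_def)
  then have "fscale (of_real (C + 1)) (fscale (of_real r) (point_function \<Phi>)) = point_function \<Phi>"
    by (simp only: fscale_fscale of_real_mult[symmetric] of_real_1 fscale_one)
  ultimately show ?thesis by simp
qed

lemma bidual_eq_on_eval_closed_span:
  assumes g: "point_function \<Phi> \<in> F" and \<phi>: "\<phi> \<in> eval_closed_span F N"
  shows "\<Phi> \<phi> = \<phi> (point_function \<Phi>)"
proof -
  let ?g = "point_function \<Phi>"
  have \<phi>_dual: "\<phi> \<in> dual_space F N" using \<phi> by (simp add: eval_closed_span_iff)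
  have "cmod (\<Phi> \<phi> - \<phi> ?g) \<le> 0 + e" if "0 < e" for e
  proof -
    define \<delta> where "\<delta> = e / (C + N ?g + 1)"
    have "0 < \<delta>" using that C_nonneg N_nonneg[OF g] by (simp add: \<delta>_def)
    then obtain \<psi> where \<psi>: "\<psi> \<in> eval_span" "dual_norm F N (\<phi> - \<psi>) < \<delta>"
      using \<phi> unfolding eval_closed_span_iff by blast
    have \<psi>_dual: "\<psi> \<in> dual_space F N" using \<psi>(1) eval_span_subset_dual_space by blast
    have diff_dual: "\<phi> - \<psi> \<in> dual_space F N" by (rule fsubspace_diff[OF fsubspace_dual_space \<phi>_dual \<psi>_dual])
    have "\<Phi> \<psi> = \<psi> ?g"
      using \<psi>(1) bidual_eval_comb[OF \<Phi>_linear] unfolding eval_span_def by blast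
    then have "\<Phi> \<phi> - \<phi> ?g = \<Phi> (\<phi> - \<psi>) - (\<phi> - \<psi>) ?g"
      using clinear_on_diff[OF \<Phi>_linear fsubspace_dual_space \<phi>_dual \<psi>_dual] by simp
    then have "cmod (\<Phi> \<phi> - \<phi> ?g) \<le> cmod (\<Phi> (\<phi> - \<psi>)) + cmod ((\<phi> - \<psi>) ?g)"
      by (simp only: norm_triangle_ineq4)
    also have "\<dots> \<le> C * dual_norm F N (\<phi> - \<psi>) + dual_norm F N (\<phi> - \<psi>) * N ?g"
      using \<Phi>_bound[OF diff_dual] dual_norm_bound[OF diff_dual g] by (rule add_mono)
    also have "\<dots> = dual_norm F N (\<phi> - \<psi>) * (C + N ?g)"
      by (simp add: algebra_simps)
    also have "\<dots> \<le> \<delta> * (C + N ?g + 1)"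
      using \<psi>(2) dual_norm_nonneg[OF diff_dual] C_nonneg N_nonneg[OF g] by (intro mult_mono) simp_all
    also have "\<dots> = e" using C_nonneg N_nonneg[OF g] by (simp add: \<delta>_def)
    finally show ?thesis by simp
  qed
  then have "cmod (\<Phi> \<phi> - \<phi> ?g) \<le> 0" by (rule field_le_epsilon)
  then show ?thesis by simp
qed

end

lemma reflexive_if_regular_dense:
  assumes regular: "regular_fs F N" and dense: "eval_closed_span F N = dual_space F N"
  shows "reflexive_fs F N"
  unfolding reflexive_fs_def
proof
  fix \<Phi> assume \<Phi>: "\<Phi> \<in> bidual_space F N"
  then have \<Phi>_linear: "clinear_on (dual_space F N) \<Phi>" by (simp add: mem_bidual_space_iff)
  obtain C where C: "0 \<le> C" "\<And>\<phi>. \<phi> \<in> dual_space F N \<Longrightarrow> cmod (\<Phi> \<phi>) \<le> C * dual_norm F N \<phi>"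
    using bidual_space_bound[OF \<Phi>] by blast
  have "point_function \<Phi> \<in> F"
    using point_function_in_if_regular[OF \<Phi>_linear C regular] .
  moreover have "\<forall>\<phi>\<in>dual_space F N. \<Phi> \<phi> = \<phi> (point_function \<Phi>)"
    using bidual_eq_on_eval_closed_span[OF \<Phi>_linear C calculation] dense by blast
  ultimately show "\<exists>f\<in>F. \<forall>\<phi>\<in>dual_space F N. \<Phi> \<phi> = \<phi> f" by blast
qed

end

theorem proposition5p1:
  fixes F :: "('x \<Rightarrow> complex) set" and N :: "('x \<Rightarrow> complex) \<Rightarrow> real"
  assumes "normed_function_space F N"
  shows "reflexive_fs F N \<longleftrightarrow> (regular_fs F N \<and> eval_closed_span F N = dual_space F N)"
proof -
  interpret normed_fun_space F N using assms by (rule normed_fun_space.intro)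
  show ?thesis
    using regular_if_reflexive eval_closed_span_eq_dual_space_if_reflexive reflexive_if_regular_dense
    by blast
qed

end
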